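(* Let $\pi,\pi'$ be probability distributions on the nonnegative integers and let $\mathbf A,\mathbf A'\subseteq\mathbb R^d$ be the limiting shapes of the frog model on $\mathbb Z^d$ with i.i.d.-$\pi$ and i.i.d.-$\pi'$ sleeping frogs per site, respectively. If $\pi\preceq_{\mathrm{pgf}}\pi'$, then $\mathbf A\subseteq\mathbf A'$.
   Context: Frog model on $\mathbb Z^d$ (discrete time): one active frog at the origin and i.i.d.-$\pi$ sleeping frogs at each other site; active frogs perform independent simple random walks, and a frog woken at time $s$ is at step $j$ of its walk at time $s+j$; when an active frog visits a site with sleeping frogs, all activate. Let $\xi_n$ be the union of the cubes $x+(-1/2,1/2]^d$ over sites $x$ visited by time $n$. The limiting shape is the convex set $\mathbf A$ (known to exist) such that for every $0<\epsilon<1$, almost surely $(1-\epsilon)\mathbf A\subseteq\xi_n/n\subseteq(1+\epsilon)\mathbf A$ for all sufficiently large $n$. For distributions of $X,Y$ on $[0,\infty]$, $X\preceq_{\mathrm{pgf}}Y$ means $\mathbf E t^X\ge\mathbf E t^Y$ for all $t\in(0,1)$. *)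

theory Defs
  imports "HOL-Probability.Probability"
begin

definition unit_steps :: "(int^'d) set" where
  "unit_steps = {v. \<exists>i. v = axis i 1 \<or> v = axis i (-1)}"

text \<open>Randomness of the frog model: eta x = number of sleeping frogs at site x
  (the value at the origin is ignored: there is exactly one, active, frog there);
  X (x, i, k) = (k+1)-th increment of the walk of the i-th frog at site x.\<close>

definition frog_space ::
  "nat pmf \<Rightarrow> ((int^'d \<Rightarrow> nat) \<times> ((int^'d) \<times> nat \<times> nat \<Rightarrow> int^'d)) measure" where
  "frog_space \<pi> =
     (PiM UNIV (\<lambda>_. measure_pmf \<pi>)) \<Otimes>\<^sub>M
     (PiM UNIV (\<lambda>_. measure_pmf (pmf_of_set unit_steps)))"

definition frogs_at :: "(int^'d \<Rightarrow> nat) \<Rightarrow> int^'d \<Rightarrow> nat" where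
  "frogs_at eta y = (if y = 0 then 1 else eta y)"

definition walk :: "((int^'d) \<times> nat \<times> nat \<Rightarrow> int^'d) \<Rightarrow> int^'d \<Rightarrow> nat \<Rightarrow> nat \<Rightarrow> int^'d" where
  "walk X x i j = (\<Sum>k<j. X (x, i, k))"

text \<open>The first reaching
  time of each site coincides with its first visit time in the frog model (frogs woken
  at the first visit time are ahead of any later-started copies), hence the set of sites
  visited by time n is exactly the set of sites reached at some time <= n.\<close>

inductive reached :: "(int^'d \<Rightarrow> nat) \<Rightarrow> ((int^'d) \<times> nat \<times> nat \<Rightarrow> int^'d) \<Rightarrow> int^'d \<Rightarrow> nat \<Rightarrow> bool"
  for eta X where
  origin: "reached eta X 0 0"
| step: "reached eta X y s \<Longrightarrow> i < frogs_at eta y \<Longrightarrow> reached eta X (y + walk X y i j) (s + j)"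

definition visited :: "(int^'d \<Rightarrow> nat) \<Rightarrow> ((int^'d) \<times> nat \<times> nat \<Rightarrow> int^'d) \<Rightarrow> nat \<Rightarrow> (int^'d) set" where
  "visited eta X n = {x. \<exists>s\<le>n. reached eta X x s}"

definition cube :: "int^'d \<Rightarrow> (real^'d) set" where
  "cube x = {p. \<forall>i. real_of_int (x $ i) - 1/2 < p $ i \<and> p $ i \<le> real_of_int (x $ i) + 1/2}"

definition xi :: "(int^'d \<Rightarrow> nat) \<Rightarrow> ((int^'d) \<times> nat \<times> nat \<Rightarrow> int^'d) \<Rightarrow> nat \<Rightarrow> (real^'d) set" where
  "xi eta X n = (\<Union>x\<in>visited eta X n. cube x)"

text \<open>A is the limiting shape (taken closed, which makes it unique).\<close>

definition is_limit_shape :: "nat pmf \<Rightarrow> (real^'d) set \<Rightarrow> bool" where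
  "is_limit_shape \<pi> A \<longleftrightarrow> convex A \<and> closed A \<and>
     (\<forall>\<epsilon>::real. 0 < \<epsilon> \<and> \<epsilon> < 1 \<longrightarrow>
        (AE \<omega> in frog_space \<pi>. eventually (\<lambda>n.
            (\<lambda>p. (1 - \<epsilon>) *\<^sub>R p) ` A \<subseteq> (\<lambda>p. (1 / real n) *\<^sub>R p) ` xi (fst \<omega>) (snd \<omega>) n \<and>
            (\<lambda>p. (1 / real n) *\<^sub>R p) ` xi (fst \<omega>) (snd \<omega>) n \<subseteq> (\<lambda>p. (1 + \<epsilon>) *\<^sub>R p) ` A)
          sequentially))"

definition pgf_le :: "nat pmf \<Rightarrow> nat pmf \<Rightarrow> bool" where
  "pgf_le \<pi> \<pi>' \<longleftrightarrow> (\<forall>t::real. 0 < t \<and> t < 1 \<longrightarrow>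
     measure_pmf.expectation \<pi> (\<lambda>k. t ^ k) \<ge> measure_pmf.expectation \<pi>' (\<lambda>k. t ^ k))"

end

theory Submission
  imports Defs
begin

text \<open>More sleeping frogs in the pgf order make every fixed site less likely to be missed.
  Condition on everything outside a site y \<noteq> 0. Then x stays unvisited up to time n iff it
  stays unvisited with y emptied and each of the eta y frogs at y, released at the first visit
  to y, misses it. These frogs miss x independently with a common probability q, so the
  conditional probability is c * E q^(eta y), which can only decrease when \<pi> is replaced by
  \<pi>'. Up to time n only the finite box of radius n matters, so exchanging the laws site by
  site gives P_\<pi>'(x unvisited at n) \<le> P_\<pi>(x unvisited at n).

  If a \<in> A - A', choose \<epsilon> with (1 - \<epsilon>) a \<notin> (1 + \<epsilon>) A'. The site nearest to
  n (1 - \<epsilon>) a is then almost surely eventually visited by time n under \<pi> and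
  eventually unvisited under \<pi>', so the two probabilities tend to 0 and 1, contradicting
  the inequality.\<close>

type_synonym 'd steps = "(int, 'd) vec \<times> nat \<times> nat \<Rightarrow> (int, 'd) vec"
type_synonym 'd config = "((int, 'd) vec \<Rightarrow> nat) \<times> 'd steps"
type_synonym 'd site_data = "nat \<times> (nat \<Rightarrow> nat \<Rightarrow> (int, 'd) vec)"

section \<open>Splitting off the frogs of one site\<close>

lemma reached_transfer:
  assumes "reached eta X x s"
    and "\<And>y i. i < frogs_at eta y \<Longrightarrow> \<exists>i' < frogs_at eta' y. \<forall>j. walk X' y i' j = walk X y i j"
  shows "reached eta' X' x s"
  using assms(1)
proof induction
  case origin
  show ?case by (rule reached.origin)
next
  case (step y s i j)
  then obtain i' where "i' < frogs_at eta' y" "walk X' y i' j = walk X y i j"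
    using assms(2) by blast
  with reached.step[OF step.IH this(1), of j] show ?case by simp
qed

lemma reached_frogs_mono:
  assumes "reached eta X x s" "\<And>y. frogs_at eta y \<le> frogs_at eta' y"
  shows "reached eta' X x s"
  using assms(2) by (intro reached_transfer[OF assms(1)]) (blast intro: less_le_trans)

lemma reached_empty_site_cong:
  assumes "reached eta X x s" "y \<noteq> 0" "eta y = 0"
    and "\<And>z l k. z \<noteq> y \<Longrightarrow> X' (z, l, k) = X (z, l, k)"
  shows "reached eta X' x s"
proof (rule reached_transfer[OF assms(1)])
  fix z i
  assume i: "i < frogs_at eta z"
  with assms(2,3) have "z \<noteq> y" by (auto simp: frogs_at_def)
  with i assms(4) show "\<exists>i' < frogs_at eta z. \<forall>j. walk X' z i' j = walk X z i j"
    by (auto simp: walk_def)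
qed

text \<open>The frogs sleeping at y only move after y has been reached, so until
  then the process does not depend on them.\<close>

lemma reached_without_site:
  assumes "reached eta X x s" "y \<noteq> 0"
  shows "reached (eta(y := 0)) X x s \<or> (\<exists>s'\<le>s. reached (eta(y := 0)) X y s')"
  using assms(1)
proof induction
  case origin
  show ?case by (simp add: reached.origin)
next
  case (step z s i j)
  show ?case
  proof (cases "z = y")
    case True
    with step.IH show ?thesis by (meson le_add1 order.trans)
  next
    case False
    then have "i < frogs_at (eta(y := 0)) z"
      using step.hyps by (auto simp: frogs_at_def)
    with step.IH show ?thesis by (meson le_add1 order.trans reached.step)
  qed
qed

lemma reached_site_emptied:
  assumes "reached eta X y s" "y \<noteq> 0"
  obtains s' where "s' \<le> s" "reached (eta(y := 0)) X y s'"
  using reached_without_site[OF assms] by blast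

text \<open>Every frog at y follows the walk of frog i; together with eta(y := 1) this leaves
  frog i alone at y.\<close>

definition promote_frog :: "'d steps \<Rightarrow> int^'d \<Rightarrow> nat \<Rightarrow> 'd steps" where
  "promote_frog X y i = (\<lambda>(z, l, k). if z = y then X (y, i, k) else X (z, l, k))"

lemma promote_frog_other_site [simp]: "z \<noteq> y \<Longrightarrow> promote_frog X y i (z, l, k) = X (z, l, k)"
  by (simp add: promote_frog_def)

lemma walk_promote_frog_same_site [simp]: "walk (promote_frog X y i) y l j = walk X y i j"
  by (simp add: promote_frog_def walk_def)

lemma reached_promote_frog_iff:
  assumes "y \<noteq> 0"
  shows "reached (eta(y := 0)) (promote_frog X y i) x s \<longleftrightarrow> reached (eta(y := 0)) X x s"
  using assms reached_empty_site_cong[of "eta(y := 0)" _ x s y] by auto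

lemma reached_split_site:
  assumes "reached eta X x s" "y \<noteq> 0"
  shows "reached (eta(y := 0)) X x s \<or>
    (\<exists>i<eta y. \<exists>s'\<le>s. reached (eta(y := 1)) (promote_frog X y i) x s')"
  using assms(1)
proof induction
  case origin
  show ?case by (simp add: reached.origin)
next
  case (step z s i j)
  show ?case
  proof (cases "z = y")
    case True
    have "\<exists>s'\<le>s. reached (eta(y := 0)) X y s'"
      using step.IH
    proof (elim disjE exE conjE)
      fix i' s' assume "s' \<le> s" "reached (eta(y := 1)) (promote_frog X y i') z s'"
      with True assms(2) obtain s'' where "s'' \<le> s'" "reached (eta(y := 0)) (promote_frog X y i') y s''"
        by (metis fun_upd_upd reached_site_emptied)
      with \<open>s' \<le> s\<close> show ?thesis
        using reached_promote_frog_iff[OF assms(2)] by (meson order.trans)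
    qed (use True in blast)
    then obtain s' where "s' \<le> s" "reached (eta(y := 0)) X y s'" by blast
    then have "reached (eta(y := 0)) (promote_frog X y i) y s'"
      using reached_promote_frog_iff[OF assms(2)] by blast
    then have "reached (eta(y := 1)) (promote_frog X y i) y s'"
      by (rule reached_frogs_mono) (simp add: frogs_at_def)
    from reached.step[OF this, of 0 j]
    have "reached (eta(y := 1)) (promote_frog X y i) (y + walk X y i j) (s' + j)"
      using assms(2) by (simp add: frogs_at_def)
    moreover have "i < eta y" using step.hyps True assms(2) by (simp add: frogs_at_def)
    ultimately show ?thesis using \<open>s' \<le> s\<close> True by (meson add_le_mono1)
  next
    case False
    have "i < frogs_at (eta(y := 0)) z" "i < frogs_at (eta(y := 1)) z"
      using step.hyps False by (auto simp: frogs_at_def)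
    moreover have "walk (promote_frog X y i') z i j = walk X z i j" for i'
      using False by (simp add: walk_def)
    ultimately show ?thesis
      using step.IH by (metis add_le_mono1 reached.step)
  qed
qed

lemma visited_split_site:
  assumes "y \<noteq> 0"
  shows "x \<in> visited eta X n \<longleftrightarrow>
    x \<in> visited (eta(y := 0)) X n \<or> (\<exists>i<eta y. x \<in> visited (eta(y := 1)) (promote_frog X y i) n)"
proof
  assume "x \<in> visited eta X n"
  then obtain s where "s \<le> n" "reached eta X x s" by (auto simp: visited_def)
  with reached_split_site[OF this(2) assms]
  show "x \<in> visited (eta(y := 0)) X n \<or> (\<exists>i<eta y. x \<in> visited (eta(y := 1)) (promote_frog X y i) n)"
    unfolding visited_def by (auto intro: order.trans)
next
  have "reached eta X x s" if "reached (eta(y := 0)) X x s" for s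
    using that by (rule reached_frogs_mono) (simp add: frogs_at_def)
  moreover have "reached eta X x s"
    if "i < eta y" "reached (eta(y := 1)) (promote_frog X y i) x s" for i s
  proof (rule reached_transfer[OF that(2)])
    fix z l assume l: "l < frogs_at (eta(y := 1)) z"
    show "\<exists>l' < frogs_at eta z. \<forall>j. walk X z l' j = walk (promote_frog X y i) z l j"
    proof (cases "z = y")
      case True
      then show ?thesis using that(1) assms by (auto simp: frogs_at_def)
    next
      case False
      then show ?thesis using l by (auto simp: frogs_at_def walk_def)
    qed
  qed
  ultimately show "x \<in> visited eta X n"
    if "x \<in> visited (eta(y := 0)) X n \<or> (\<exists>i<eta y. x \<in> visited (eta(y := 1)) (promote_frog X y i) n)"
    using that unfolding visited_def by blast
qed

section \<open>Locality\<close>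

definition lattice_box :: "nat \<Rightarrow> (int^'d) set" where
  "lattice_box n = {y. \<forall>l. \<bar>y $ l\<bar> \<le> int n}"

lemma zero_in_lattice_box [simp]: "0 \<in> lattice_box n"
  by (simp add: lattice_box_def)

lemma lattice_box_mono: "m \<le> n \<Longrightarrow> lattice_box m \<subseteq> lattice_box n"
  unfolding lattice_box_def by (auto intro: order.trans)

lemma finite_lattice_box: "finite (lattice_box n :: (int^'d) set)"
proof -
  have "vec_nth ` (lattice_box n :: (int^'d) set) \<subseteq> PiE UNIV (\<lambda>_. {- int n..int n})"
    by (auto simp: lattice_box_def abs_le_iff minus_le_iff)
  then have "finite (vec_nth ` (lattice_box n :: (int^'d) set))"
    by (rule finite_subset) (intro finite_PiE, auto)
  moreover have "inj vec_nth" by (simp add: inj_on_def vec_eq_iff)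
  ultimately show ?thesis by (metis finite_imageD inj_on_subset subset_UNIV)
qed

lemma unit_steps_component_bound: "v \<in> unit_steps \<Longrightarrow> \<bar>v $ l\<bar> \<le> 1"
  by (auto simp: unit_steps_def axis_def)

lemma walk_component_bound:
  assumes "\<And>k. k < j \<Longrightarrow> X (y, i, k) \<in> unit_steps"
  shows "\<bar>walk X y i j $ l\<bar> \<le> int j"
  using assms
proof (induction j)
  case 0
  show ?case by (simp add: walk_def)
next
  case (Suc j)
  have "walk X y i (Suc j) $ l = walk X y i j $ l + X (y, i, j) $ l"
    by (simp add: walk_def)
  moreover have "\<bar>X (y, i, j) $ l\<bar> \<le> 1"
    using Suc.prems unit_steps_component_bound by blast
  ultimately show ?case using Suc by fastforce
qed

lemma reached_local:
  assumes "reached eta X x s" "s \<le> n"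
    and frogs: "\<And>y. y \<in> lattice_box n \<Longrightarrow> frogs_at eta' y = frogs_at eta y"
    and steps: "\<And>y i k. y \<in> lattice_box n \<Longrightarrow> i < frogs_at eta y \<Longrightarrow> k < n \<Longrightarrow>
      X (y, i, k) \<in> unit_steps \<and> X' (y, i, k) = X (y, i, k)"
  shows "reached eta' X' x s \<and> x \<in> lattice_box s"
  using assms(1,2)
proof induction
  case origin
  show ?case by (simp add: reached.origin)
next
  case (step y s i j)
  then have IH: "reached eta' X' y s" "y \<in> lattice_box s" by auto
  have y: "y \<in> lattice_box n"
    using IH(2) step.prems lattice_box_mono[of s n] by auto
  have unit: "X (y, i, k) \<in> unit_steps" and same: "X' (y, i, k) = X (y, i, k)" if "k < j" for k
    using steps[OF y step.hyps(2)] that step.prems by auto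
  have "walk X' y i j = walk X y i j"
    unfolding walk_def using same by simp
  moreover have "i < frogs_at eta' y" using frogs[OF y] step.hyps(2) by simp
  ultimately have "reached eta' X' (y + walk X y i j) (s + j)"
    using reached.step[OF IH(1)] by metis
  moreover have "y + walk X y i j \<in> lattice_box (s + j)"
  proof -
    have "\<bar>walk X y i j $ l\<bar> \<le> int j" for l
      using unit by (rule walk_component_bound)
    with IH(2) show ?thesis
      unfolding lattice_box_def by (force intro: order.trans[OF abs_triangle_ineq] add_mono)
  qed
  ultimately show ?case by blast
qed

definition local_config :: "nat \<Rightarrow> 'd config \<Rightarrow> (int^'d \<Rightarrow> 'd site_data)" where
  "local_config n \<omega> = (\<lambda>y. if y \<in> lattice_box n then (frogs_at (fst \<omega>) y,
     \<lambda>i k. if i < frogs_at (fst \<omega>) y \<and> k < n then snd \<omega> (y, i, k) else 0) else (0, \<lambda>_ _. 0))"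

definition config_of :: "(int^'d \<Rightarrow> 'd site_data) \<Rightarrow> 'd config" where
  "config_of z = (\<lambda>y. fst (z y), \<lambda>(y, i, k). snd (z y) i k)"

definition visits :: "int^'d \<Rightarrow> nat \<Rightarrow> (int^'d \<Rightarrow> 'd site_data) \<Rightarrow> bool" where
  "visits x n z \<longleftrightarrow> x \<in> visited (fst (config_of z)) (snd (config_of z)) n"

lemma visits_local_config:
  assumes "\<forall>j. snd \<omega> j \<in> unit_steps"
  shows "visits x n (local_config n \<omega>) \<longleftrightarrow> x \<in> visited (fst \<omega>) (snd \<omega>) n"
proof -
  define \<omega>' where "\<omega>' = config_of (local_config n \<omega>)"
  have frogs: "frogs_at (fst \<omega>') y = frogs_at (fst \<omega>) y" if "y \<in> lattice_box n" for y
    using that by (simp add: \<omega>'_def config_of_def local_config_def frogs_at_def)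
  have steps: "snd \<omega>' (y, i, k) = snd \<omega> (y, i, k)"
    if "y \<in> lattice_box n" "i < frogs_at (fst \<omega>) y" "k < n" for y i k
    using that by (simp add: \<omega>'_def config_of_def local_config_def)
  have "reached (fst \<omega>') (snd \<omega>') x s \<longleftrightarrow> reached (fst \<omega>) (snd \<omega>) x s" if "s \<le> n" for s
    using reached_local[of _ _ x s n] that frogs steps assms by (metis (no_types, lifting))
  then show ?thesis
    unfolding visits_def visited_def \<omega>'_def by auto
qed

section \<open>Comparison of the local laws\<close>

lemma pgf_le_closed_interval:
  fixes q :: real
  assumes "pgf_le \<pi> \<pi>'" "0 \<le> q" "q \<le> 1"
  shows "measure_pmf.expectation \<pi>' (\<lambda>k. q ^ k) \<le> measure_pmf.expectation \<pi> (\<lambda>k. q ^ k)"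
proof -
  have open_interval: "measure_pmf.expectation \<pi>' (\<lambda>k. t ^ k) \<le> measure_pmf.expectation \<pi> (\<lambda>k. t ^ k)"
    if "0 < t" "t < 1" for t :: real
    using assms(1) that unfolding pgf_le_def by blast
  consider "0 < q \<and> q < 1" | "q = 1" | "q = 0" using assms(2,3) by linarith
  then show ?thesis
  proof cases
    case 3
    define t where "t m = 1 / real (m + 2)" for m
    have t: "0 < t m" "t m < 1" for m by (auto simp: t_def)
    have "t \<longlonglongrightarrow> 0"
      unfolding t_def using LIMSEQ_ignore_initial_segment[OF lim_1_over_n, of 2] by simp
    moreover have "\<bar>t m ^ k\<bar> \<le> 1" for m k
      using t[of m] by (simp add: power_abs power_le_one)
    ultimately have conv: "(\<lambda>m. measure_pmf.expectation \<rho> (\<lambda>k. t m ^ k)) \<longlonglongrightarrow> measure_pmf.expectation \<rho> (\<lambda>k. 0 ^ k)"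
      for \<rho> :: "nat pmf"
      by (intro integral_dominated_convergence[where w = "\<lambda>_. 1"] AE_I2 tendsto_power)
        auto
    have "measure_pmf.expectation \<pi>' (\<lambda>k. (0::real) ^ k) \<le> measure_pmf.expectation \<pi> (\<lambda>k. 0 ^ k)"
      by (rule LIMSEQ_le[OF conv conv]) (use open_interval t in auto)
    then show ?thesis using 3 by simp
  qed (use open_interval in auto)
qed

definition walk_law :: "nat \<Rightarrow> (nat \<Rightarrow> int^'d) pmf" where
  "walk_law n = Pi_pmf {..<n} 0 (\<lambda>_. pmf_of_set unit_steps)"

definition site_law :: "nat \<Rightarrow> nat pmf \<Rightarrow> ('d::finite) site_data pmf" where
  "site_law n \<rho> = bind_pmf \<rho> (\<lambda>v. map_pmf (Pair v) (Pi_pmf {..<v} (\<lambda>_. 0) (\<lambda>_. walk_law n)))"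

text \<open>The image of frog_space \<rho> under local_config n,
  see emeasure_local_config_vimage.\<close>

definition local_law :: "nat \<Rightarrow> nat pmf \<Rightarrow> (int^'d \<Rightarrow> 'd site_data) pmf" where
  "local_law n \<rho> =
     Pi_pmf (lattice_box n) (0, \<lambda>_ _. 0) (\<lambda>y. site_law n (if y = 0 then return_pmf 1 else \<rho>))"

lemma emeasure_Pi_pmf_mono_at:
  assumes "finite B" "y \<in> B" "\<And>z. z \<noteq> y \<Longrightarrow> p' z = p z"
    and "\<And>f. emeasure (map_pmf (\<lambda>s. f(y := s)) (p' y)) S \<le> emeasure (map_pmf (\<lambda>s. f(y := s)) (p y)) S"
  shows "emeasure (Pi_pmf B d p') S \<le> emeasure (Pi_pmf B d p) S"
proof -
  have split: "Pi_pmf B d r = bind_pmf (Pi_pmf (B - {y}) d r) (\<lambda>f. map_pmf (\<lambda>s. f(y := s)) (r y))" for r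
  proof -
    have "Pi_pmf B d r = Pi_pmf (insert y (B - {y})) d r"
      using assms(2) by (simp add: insert_absorb)
    also have "\<dots> = bind_pmf (r y) (\<lambda>s. bind_pmf (Pi_pmf (B - {y}) d r) (\<lambda>f. return_pmf (f(y := s))))"
      using assms(1) by (intro Pi_pmf_insert') auto
    also have "\<dots> = bind_pmf (Pi_pmf (B - {y}) d r) (\<lambda>f. map_pmf (\<lambda>s. f(y := s)) (r y))"
      by (subst bind_commute_pmf) (simp add: map_pmf_def o_def)
    finally show ?thesis .
  qed
  have rest: "Pi_pmf (B - {y}) d p' = Pi_pmf (B - {y}) d p"
    using assms(3) by (intro Pi_pmf_cong) auto
  show ?thesis
    unfolding split[of p] split[of p'] emeasure_bind_pmf rest by (intro nn_integral_mono assms(4))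
qed

lemma emeasure_Pi_pmf_mono_sitewise:
  assumes "finite B"
    and "\<And>y f. y \<in> B \<Longrightarrow>
      emeasure (map_pmf (\<lambda>s. f(y := s)) (p' y)) S \<le> emeasure (map_pmf (\<lambda>s. f(y := s)) (p y)) S"
  shows "emeasure (Pi_pmf B d p') S \<le> emeasure (Pi_pmf B d p) S"
proof -
  have "emeasure (Pi_pmf B d (\<lambda>z. if z \<in> C then p' z else p z)) S \<le> emeasure (Pi_pmf B d p) S"
    if "C \<subseteq> B" for C
    using finite_subset[OF that assms(1)] that
  proof (induction C)
    case (insert y C)
    have "emeasure (Pi_pmf B d (\<lambda>z. if z \<in> insert y C then p' z else p z)) S
        \<le> emeasure (Pi_pmf B d (\<lambda>z. if z \<in> C then p' z else p z)) S"
      using insert.hyps insert.prems assms by (intro emeasure_Pi_pmf_mono_at) auto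
    also have "\<dots> \<le> emeasure (Pi_pmf B d p) S"
      using insert by simp
    finally show ?case .
  qed simp
  moreover have "Pi_pmf B d (\<lambda>z. if z \<in> B then p' z else p z) = Pi_pmf B d p'"
    by (rule Pi_pmf_cong) auto
  ultimately show ?thesis by force
qed

lemma config_of_update:
  "config_of (f(y := (v, P))) =
     ((fst (config_of f))(y := v), \<lambda>(z, i, k). if z = y then P i k else snd (config_of f) (z, i, k))"
  by (auto simp: config_of_def)

lemma visited_empty_site_cong:
  assumes "y \<noteq> 0" "eta y = 0" "\<And>z l k. z \<noteq> y \<Longrightarrow> X' (z, l, k) = X (z, l, k)"
  shows "visited eta X' n = visited eta X n"
proof -
  have "reached eta X' x s \<longleftrightarrow> reached eta X x s" for x s
    using reached_empty_site_cong[of eta _ x s y] assms by metis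
  then show ?thesis unfolding visited_def by simp
qed

lemma not_visits_split_site:
  assumes "y \<noteq> 0"
  shows "\<not> visits x n (f(y := (v, P))) \<longleftrightarrow>
    \<not> visits x n (f(y := (0, \<lambda>_ _. 0))) \<and> (\<forall>i<v. \<not> visits x n (f(y := (1, \<lambda>_. P i))))"
proof -
  obtain eta X where f: "fst (config_of f) = eta" "snd (config_of f) = X" by blast
  define X' where "X' = (\<lambda>(z, i, k). if z = y then P i k else X (z, i, k))"
  have "visits x n (f(y := (v, P))) \<longleftrightarrow> x \<in> visited (eta(y := v)) X' n"
    unfolding visits_def config_of_update f X'_def by simp
  moreover have "visits x n (f(y := (0, \<lambda>_ _. 0))) \<longleftrightarrow> x \<in> visited (eta(y := 0)) X' n"
  proof -
    have "visited (eta(y := 0)) (\<lambda>(z, i, k). if z = y then 0 else X (z, i, k)) n =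
        visited (eta(y := 0)) X' n"
      unfolding X'_def using assms by (intro visited_empty_site_cong) auto
    then show ?thesis unfolding visits_def config_of_update f by simp
  qed
  moreover have "visits x n (f(y := (1, \<lambda>_. P i))) \<longleftrightarrow> x \<in> visited (eta(y := 1)) (promote_frog X' y i) n"
    for i
  proof -
    have "promote_frog X' y i = (\<lambda>(z, l, k). if z = y then P i k else X (z, l, k))"
      by (auto simp: promote_frog_def X'_def)
    then show ?thesis unfolding visits_def config_of_update f by simp
  qed
  ultimately show ?thesis
    using visited_split_site[OF assms, of x "eta(y := v)" X' n] by simp
qed

text \<open>Given the other sites, the frogs at y miss x independently with a common
  probability q.\<close>

lemma emeasure_site_law_not_visits:
  fixes f :: "int^'d \<Rightarrow> 'd site_data" and x :: "int^'d" and n :: nat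
  assumes "y \<noteq> 0"
  defines "c \<equiv> of_bool (\<not> visits x n (f(y := (0, \<lambda>_ _. 0)))) :: real"
    and "q \<equiv> measure_pmf.prob (walk_law n) {w. \<not> visits x n (f(y := (1, \<lambda>_. w)))}"
  shows "emeasure (map_pmf (\<lambda>s. f(y := s)) (site_law n \<rho>)) {z. \<not> visits x n z} =
    ennreal (c * measure_pmf.expectation \<rho> (\<lambda>k. q ^ k))"
proof -
  define Miss where "Miss = {w. \<not> visits x n (f(y := (1, \<lambda>_. w)))}"
  have "Pair v -` (\<lambda>s. f(y := s)) -` {z. \<not> visits x n z} = (if c = 1 then Pi {..<v} (\<lambda>_. Miss) else {})"
    for v
    using not_visits_split_site[OF assms(1), of x n f v] by (auto simp: c_def Miss_def Pi_def)
  moreover have "measure_pmf.prob (Pi_pmf {..<v} (\<lambda>_. 0) (\<lambda>_. walk_law n)) (Pi {..<v} (\<lambda>_. Miss)) = q ^ v"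
    for v
    by (subst measure_Pi_pmf_Pi) (auto simp: q_def Miss_def)
  ultimately have fibre: "emeasure (Pi_pmf {..<v} (\<lambda>_. 0) (\<lambda>_. walk_law n))
      (Pair v -` (\<lambda>s. f(y := s)) -` {z. \<not> visits x n z}) = ennreal (c * q ^ v)" for v
    by (auto simp: measure_pmf.emeasure_eq_measure c_def)
  have "0 \<le> q" "q \<le> 1" by (auto simp: q_def)
  then have "integrable \<rho> (\<lambda>k. q ^ k)"
    by (intro measure_pmf.integrable_const_bound[where B = 1]) (auto simp: power_le_one)
  moreover have "c = 0 \<or> c = 1" by (simp add: c_def)
  ultimately have "(\<integral>\<^sup>+v. ennreal (c * q ^ v) \<partial>\<rho>) = ennreal (c * measure_pmf.expectation \<rho> (\<lambda>k. q ^ k))"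
    using \<open>0 \<le> q\<close> by (auto simp: nn_integral_eq_integral)
  then show ?thesis
    unfolding site_law_def by (simp add: fibre del: vimage_Collect_eq)
qed

lemma local_law_not_visits_mono:
  assumes "pgf_le \<pi> \<pi>'"
  shows "emeasure (local_law n \<pi>') {z. \<not> visits x n z} \<le> emeasure (local_law n \<pi>) {z. \<not> visits x n z}"
  unfolding local_law_def
proof (rule emeasure_Pi_pmf_mono_sitewise[OF finite_lattice_box])
  fix y f
  let ?miss = "\<lambda>\<rho>. emeasure (map_pmf (\<lambda>s. f(y := s)) (site_law n \<rho>)) {z. \<not> visits x n z}"
  have "y \<noteq> 0 \<Longrightarrow> ?miss \<pi>' \<le> ?miss \<pi>"
    unfolding emeasure_site_law_not_visits
    by (intro ennreal_leI mult_left_mono pgf_le_closed_interval[OF assms]) auto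
  then show "?miss (if y = 0 then return_pmf 1 else \<pi>') \<le> ?miss (if y = 0 then return_pmf 1 else \<pi>)"
    by (cases "y = 0") auto
qed

section \<open>The local law as an image of the frog space\<close>

lemma finite_unit_steps: "finite (unit_steps :: (int^'d) set)"
proof -
  have "unit_steps \<subseteq> (\<lambda>(i, b). axis i (if b then 1 else -1)) ` (UNIV :: ('d \<times> bool) set)"
    by (auto simp: unit_steps_def image_iff) (metis (full_types))+
  then show ?thesis by (rule finite_subset) simp
qed

lemma set_pmf_unit_steps: "set_pmf (pmf_of_set unit_steps) = (unit_steps :: (int^'d) set)"
proof (rule set_pmf_of_set[OF _ finite_unit_steps])
  show "unit_steps \<noteq> {}" by (auto simp: unit_steps_def)
qed

lemma local_config_eq_iff:
  "local_config n \<omega> = local_config n \<omega>0 \<longleftrightarrow>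
    (\<forall>y\<in>lattice_box n - {0}. fst \<omega> y = fst \<omega>0 y) \<and>
    (\<forall>y\<in>lattice_box n. \<forall>i<frogs_at (fst \<omega>0) y. \<forall>k<n. snd \<omega> (y, i, k) = snd \<omega>0 (y, i, k))"
  (is "?eq \<longleftrightarrow> ?frogs \<and> ?steps")
proof
  assume eq: ?eq
  have frogs: "frogs_at (fst \<omega>) y = frogs_at (fst \<omega>0) y" if "y \<in> lattice_box n" for y
    using fun_cong[OF eq, of y] that by (simp add: local_config_def)
  have "snd \<omega> (y, i, k) = snd \<omega>0 (y, i, k)"
    if "y \<in> lattice_box n" "i < frogs_at (fst \<omega>0) y" "k < n" for y i k
    using fun_cong[OF fun_cong[OF arg_cong[where f = snd, OF fun_cong[OF eq, of y]], of i], of k]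
      that frogs[OF that(1)]
    by (simp add: local_config_def)
  moreover from frogs have ?frogs by (metis DiffE frogs_at_def singletonI)
  ultimately show "?frogs \<and> ?steps" by blast
next
  assume "?frogs \<and> ?steps"
  moreover have "frogs_at (fst \<omega>) y = frogs_at (fst \<omega>0) y" if "?frogs" "y \<in> lattice_box n" for y
    using that by (auto simp: frogs_at_def)
  ultimately show ?eq by (auto simp: local_config_def fun_eq_iff)
qed

lemma pmf_site_law:
  "pmf (site_law n \<rho>) (v, P) = pmf \<rho> v * pmf (Pi_pmf {..<v} (\<lambda>_. 0) (\<lambda>_. walk_law n)) P"
proof -
  have "pmf (map_pmf (Pair v') (Pi_pmf {..<v'} (\<lambda>_. 0) (\<lambda>_. walk_law n))) (v, P) =
      indicator {v} v' * pmf (Pi_pmf {..<v} (\<lambda>_. 0) (\<lambda>_. walk_law n)) P" for v'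
    by (cases "v' = v") (auto simp: pmf_map_inj' pmf_map inj_on_def vimage_def measure_pmf_single)
  then show ?thesis
    unfolding site_law_def pmf_bind by (simp add: measure_pmf_single)
qed

lemma pmf_site_law_local_config:
  assumes "y \<in> lattice_box n"
  shows "pmf (site_law n \<rho>) (local_config n \<omega> y) =
    pmf \<rho> (frogs_at (fst \<omega>) y) *
    (\<Prod>i<frogs_at (fst \<omega>) y. \<Prod>k<n. pmf (pmf_of_set unit_steps) (snd \<omega> (y, i, k)))"
proof -
  define v where "v = frogs_at (fst \<omega>) y"
  define P where "P = (\<lambda>i k. if i < v \<and> k < n then snd \<omega> (y, i, k) else 0)"
  have "local_config n \<omega> y = (v, P)"
    using assms by (simp add: local_config_def v_def P_def)
  moreover have "pmf (Pi_pmf {..<v} (\<lambda>_. 0) (\<lambda>_. walk_law n)) P = (\<Prod>i<v. pmf (walk_law n) (P i))"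
    by (rule pmf_Pi') (auto simp: P_def)
  moreover have "pmf (walk_law n) (P i) = (\<Prod>k<n. pmf (pmf_of_set unit_steps) (snd \<omega> (y, i, k)))"
    if "i < v" for i
    unfolding walk_law_def using that by (subst pmf_Pi') (auto simp: P_def)
  ultimately show ?thesis
    by (simp add: pmf_site_law v_def)
qed

definition used_steps :: "nat \<Rightarrow> (int^'d \<Rightarrow> nat) \<Rightarrow> ((int^'d) \<times> nat \<times> nat) set" where
  "used_steps n eta = (SIGMA y:lattice_box n. {..<frogs_at eta y} \<times> {..<n})"

lemma finite_used_steps: "finite (used_steps n eta)"
  unfolding used_steps_def by (intro finite_SigmaI finite_lattice_box) auto

lemma pmf_local_law_local_config:
  fixes \<omega> :: "('d::finite) config"
  shows "pmf (local_law n \<rho>) (local_config n \<omega>) =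
     (\<Prod>y\<in>lattice_box n - {0}. pmf \<rho> (fst \<omega> y)) *
     (\<Prod>j\<in>used_steps n (fst \<omega>). pmf (pmf_of_set unit_steps) (snd \<omega> j))"
proof -
  define law where "law y = (if y = 0 then return_pmf 1 else \<rho>)" for y :: "int^'d"
  define step_prob where "step_prob j = pmf (pmf_of_set unit_steps) (snd \<omega> j)" for j
  have "pmf (local_law n \<rho>) (local_config n \<omega>) =
      (\<Prod>y\<in>lattice_box n. pmf (site_law n (law y)) (local_config n \<omega> y))"
    unfolding local_law_def law_def[symmetric]
    by (rule pmf_Pi'[OF finite_lattice_box]) (auto simp: local_config_def)
  also have "\<dots> = (\<Prod>y\<in>lattice_box n. (if y = 0 then 1 else pmf \<rho> (fst \<omega> y)) *
      (\<Prod>ik\<in>{..<frogs_at (fst \<omega>) y} \<times> {..<n}. step_prob (y, ik)))"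
    by (intro prod.cong refl)
      (simp add: pmf_site_law_local_config law_def frogs_at_def step_prob_def prod.cartesian_product)
  also have "\<dots> = (\<Prod>y\<in>lattice_box n - {0}. pmf \<rho> (fst \<omega> y)) * (\<Prod>j\<in>used_steps n (fst \<omega>). step_prob j)"
  proof -
    have "(\<Prod>y\<in>lattice_box n. if y = 0 then 1 else pmf \<rho> (fst \<omega> y)) = (\<Prod>y\<in>lattice_box n - {0}. pmf \<rho> (fst \<omega> y))"
      by (subst prod.remove[OF finite_lattice_box zero_in_lattice_box]) (auto intro!: prod.cong)
    moreover have "(\<Prod>y\<in>lattice_box n. \<Prod>ik\<in>{..<frogs_at (fst \<omega>) y} \<times> {..<n}. step_prob (y, ik)) =
        (\<Prod>j\<in>used_steps n (fst \<omega>). step_prob j)"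
      unfolding used_steps_def by (subst prod.Sigma) (auto simp: finite_lattice_box)
    ultimately show ?thesis
      by (simp add: prod.distrib)
  qed
  finally show ?thesis
    unfolding step_prob_def .
qed

lemma prob_space_frog_space: "prob_space (frog_space \<rho>)"
  unfolding frog_space_def by (intro prob_space_pair prob_space_PiM prob_space_measure_pmf)

lemma
  fixes \<omega>0 :: "('d::finite) config"
  shows sets_local_config_fibre: "{\<omega>. local_config n \<omega> = local_config n \<omega>0} \<in> sets (frog_space \<rho>)"
    and emeasure_local_config_fibre:
      "emeasure (frog_space \<rho>) {\<omega>. local_config n \<omega> = local_config n \<omega>0} =
         pmf (local_law n \<rho>) (local_config n \<omega>0)"
proof -
  let ?U = "measure_pmf (pmf_of_set unit_steps) :: (int^'d) measure"
  define J where "J = used_steps n (fst \<omega>0)"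
  define E where "E = prod_emb UNIV (\<lambda>_. measure_pmf \<rho>) (lattice_box n - {0})
    (PiE (lattice_box n - {0}) (\<lambda>y. {fst \<omega>0 y}))"
  define F where "F = prod_emb UNIV (\<lambda>_. ?U) J (PiE J (\<lambda>j. {snd \<omega>0 j}))"
  have fibre: "{\<omega>. local_config n \<omega> = local_config n \<omega>0} = E \<times> F"
    unfolding local_config_eq_iff E_def F_def J_def
    by (auto simp: prod_emb_iff PiE_iff extensional_def used_steps_def)
  have E: "E \<in> sets (PiM UNIV (\<lambda>_. measure_pmf \<rho>))"
    unfolding E_def by (intro sets_PiM_I) (auto intro: finite_lattice_box)
  have F: "F \<in> sets (PiM UNIV (\<lambda>_. ?U))"
    unfolding F_def J_def by (intro sets_PiM_I finite_used_steps) auto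
  show "{\<omega>. local_config n \<omega> = local_config n \<omega>0} \<in> sets (frog_space \<rho>)"
    unfolding fibre frog_space_def using E F by (rule pair_measureI)
  interpret steps: sigma_finite_measure "PiM UNIV (\<lambda>_. ?U)"
    by (intro prob_space_imp_sigma_finite prob_space_PiM prob_space_measure_pmf)
  have "emeasure (PiM UNIV (\<lambda>_. measure_pmf \<rho>)) E = ennreal (\<Prod>y\<in>lattice_box n - {0}. pmf \<rho> (fst \<omega>0 y))"
    unfolding E_def by (subst emeasure_PiM_emb)
      (auto intro: finite_lattice_box prob_space_measure_pmf simp: emeasure_pmf_single prod_ennreal)
  moreover have "emeasure (PiM UNIV (\<lambda>_. ?U)) F = ennreal (\<Prod>j\<in>J. pmf (pmf_of_set unit_steps) (snd \<omega>0 j))"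
    unfolding F_def J_def by (subst emeasure_PiM_emb)
      (auto intro: finite_used_steps prob_space_measure_pmf simp: emeasure_pmf_single prod_ennreal)
  ultimately show "emeasure (frog_space \<rho>) {\<omega>. local_config n \<omega> = local_config n \<omega>0} =
      pmf (local_law n \<rho>) (local_config n \<omega>0)"
    unfolding fibre frog_space_def steps.emeasure_pair_measure_Times[OF E F] pmf_local_law_local_config J_def
    by (simp add: ennreal_mult'' prod_nonneg)
qed

lemma countable_range_local_config:
  "countable (range (local_config n :: ('d::finite) config \<Rightarrow> _))"
proof -
  define trunc where "trunc v g = (\<lambda>i k. if i < v \<and> k < n then g i k else (0::int^'d))"
    for v :: nat and g :: "nat \<Rightarrow> nat \<Rightarrow> int^'d"
  define S where "S = (\<Union>v. Pair v ` trunc v ` PiE {..<v} (\<lambda>_. PiE {..<n} (\<lambda>_. UNIV)))"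
  define ext where "ext g = (\<lambda>y. if y \<in> lattice_box n then g y else (0, \<lambda>_ _. 0))"
    for g :: "int^'d \<Rightarrow> 'd site_data"
  have "range (local_config n) \<subseteq> ext ` PiE (lattice_box n) (\<lambda>_. S)"
  proof safe
    fix \<omega> :: "'d config"
    have "local_config n \<omega> y \<in> S" if "y \<in> lattice_box n" for y
    proof -
      define v where "v = frogs_at (fst \<omega>) y"
      define g where "g = restrict (\<lambda>i. restrict (\<lambda>k. snd \<omega> (y, i, k)) {..<n}) {..<v}"
      have "local_config n \<omega> y = (v, trunc v g)"
        using that by (auto simp: local_config_def trunc_def g_def v_def fun_eq_iff)
      moreover have "g \<in> PiE {..<v} (\<lambda>_. PiE {..<n} (\<lambda>_. UNIV))" unfolding g_def by auto
      ultimately show ?thesis unfolding S_def by blast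
    qed
    moreover have "local_config n \<omega> = ext (restrict (local_config n \<omega>) (lattice_box n))"
      by (auto simp: ext_def local_config_def)
    ultimately show "local_config n \<omega> \<in> ext ` PiE (lattice_box n) (\<lambda>_. S)" by auto
  qed
  moreover have "countable S"
    unfolding S_def by (intro countable_UN countable_image countable_PiE) auto
  then have "countable (ext ` PiE (lattice_box n) (\<lambda>_. S))"
    by (intro countable_image countable_PiE finite_lattice_box)
  ultimately show ?thesis by (rule countable_subset)
qed

lemma set_pmf_site_law:
  assumes "(v, P) \<in> set_pmf (site_law n \<rho>)"
  shows "v \<in> set_pmf \<rho>" and "\<And>i k. \<not> (i < v \<and> k < n) \<Longrightarrow> P i k = 0"
proof -
  from assms show "v \<in> set_pmf \<rho>" by (auto simp: site_law_def)
  from assms have "P \<in> set_pmf (Pi_pmf {..<v} (\<lambda>_. 0) (\<lambda>_. walk_law n))"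
    by (auto simp: site_law_def)
  then have beyond: "P i = (\<lambda>_. 0)" if "\<not> i < v" for i
    using that by (auto simp: set_Pi_pmf PiE_dflt_def)
  from \<open>P \<in> _\<close> have walks: "P i \<in> set_pmf (walk_law n)" if "i < v" for i
    using that by (auto simp: set_Pi_pmf PiE_dflt_def)
  have padded: "w k = 0" if "w \<in> set_pmf (walk_law n)" "\<not> k < n" for w :: "nat \<Rightarrow> int^'d" and k
    using that by (auto simp: walk_law_def set_Pi_pmf PiE_dflt_def)
  show "P i k = 0" if "\<not> (i < v \<and> k < n)" for i k
  proof (cases "i < v")
    case True
    with that padded[OF walks[OF True]] show ?thesis by simp
  next
    case False
    with beyond show ?thesis by simp
  qed
qed

lemma local_config_config_of:
  assumes "z \<in> set_pmf (local_law n \<rho>)"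
  shows "local_config n (config_of z) = z"
proof
  fix y
  show "local_config n (config_of z) y = z y"
  proof (cases "y \<in> lattice_box n")
    case False
    with assms show ?thesis
      using set_Pi_pmf_subset[OF finite_lattice_box] by (force simp: local_law_def local_config_def)
  next
    case True
    obtain v P where z: "z y = (v, P)" by fastforce
    with True assms have "(v, P) \<in> set_pmf (site_law n (if y = 0 then return_pmf 1 else \<rho>))"
      by (force simp: local_law_def set_Pi_pmf[OF finite_lattice_box] PiE_dflt_def)
    from set_pmf_site_law[OF this] have "frogs_at (fst (config_of z)) y = v"
      and "P i k = 0" if "\<not> (i < v \<and> k < n)" for i k
      using z that by (auto simp: frogs_at_def config_of_def split: if_splits)
    with True z show ?thesis
      by (auto simp: local_config_def config_of_def fun_eq_iff)
  qed
qed

lemma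
  fixes T :: "(int^'d::finite \<Rightarrow> 'd site_data) set"
  shows sets_local_config_vimage: "local_config n -` T \<in> sets (frog_space \<rho>)"
    and emeasure_local_config_vimage: "emeasure (frog_space \<rho>) (local_config n -` T) = emeasure (local_law n \<rho>) T"
proof -
  define R where "R = T \<inter> range (local_config n)"
  have "countable R"
    unfolding R_def using countable_range_local_config by (rule countable_subset[rotated]) auto
  have vimage: "local_config n -` T = (\<Union>z\<in>R. {\<omega>. local_config n \<omega> = z})"
    unfolding R_def by auto
  have fibre: "{\<omega>. local_config n \<omega> = z} \<in> sets (frog_space \<rho>)"
    "emeasure (frog_space \<rho>) {\<omega>. local_config n \<omega> = z} = emeasure (local_law n \<rho>) {z}" if "z \<in> R" for z
    using that sets_local_config_fibre emeasure_local_config_fibre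
    unfolding R_def by (auto simp: emeasure_pmf_single)
  show "local_config n -` T \<in> sets (frog_space \<rho>)"
    unfolding vimage using fibre(1) \<open>countable R\<close> by (intro sets.countable_Union) auto
  have "emeasure (frog_space \<rho>) (local_config n -` T) = (\<integral>\<^sup>+z. emeasure (local_law n \<rho>) {z} \<partial>count_space R)"
    unfolding vimage using fibre \<open>countable R\<close>
    by (subst emeasure_UN_countable) (auto simp: disjoint_family_on_def intro!: nn_integral_cong)
  also have "\<dots> = emeasure (local_law n \<rho>) R"
    by (rule emeasure_countable_singleton[symmetric]) (auto simp: \<open>countable R\<close>)
  also have "\<dots> = emeasure (local_law n \<rho>) T"
  proof -
    have "set_pmf (local_law n \<rho>) \<subseteq> range (local_config n :: 'd config \<Rightarrow> _)"
    proof
      fix z :: "int^'d \<Rightarrow> 'd site_data" assume "z \<in> set_pmf (local_law n \<rho>)"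
      then have "z = local_config n (config_of z)" by (simp add: local_config_config_of)
      then show "z \<in> range (local_config n)" by (rule range_eqI)
    qed
    then have "R \<inter> set_pmf (local_law n \<rho>) = T \<inter> set_pmf (local_law n \<rho>)"
      unfolding R_def by blast
    then show ?thesis by (metis emeasure_Int_set_pmf)
  qed
  finally show "emeasure (frog_space \<rho>) (local_config n -` T) = emeasure (local_law n \<rho>) T" .
qed

lemma AE_unit_steps: "AE \<omega> in frog_space \<rho>. \<forall>j. snd \<omega> j \<in> unit_steps"
proof (subst AE_all_countable, intro allI)
  fix j :: "(int^'d) \<times> nat \<times> nat"
  let ?U = "measure_pmf (pmf_of_set unit_steps) :: (int^'d) measure"
  define F where "F = prod_emb UNIV (\<lambda>_. ?U) {j} (PiE {j} (\<lambda>_. - unit_steps))"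
  have F: "F \<in> sets (PiM UNIV (\<lambda>_. ?U))"
    unfolding F_def by (intro sets_PiM_I) auto
  interpret steps: sigma_finite_measure "PiM UNIV (\<lambda>_. ?U)"
    by (intro prob_space_imp_sigma_finite prob_space_PiM prob_space_measure_pmf)
  have "emeasure ?U (- unit_steps) = 0"
    by (subst emeasure_Int_set_pmf[symmetric]) (simp add: set_pmf_unit_steps)
  then have "emeasure (PiM UNIV (\<lambda>_. ?U)) F = 0"
    unfolding F_def by (subst emeasure_PiM_emb) (auto intro: prob_space_measure_pmf)
  show "AE \<omega> in frog_space \<rho>. snd \<omega> j \<in> unit_steps"
  proof (rule AE_I')
    have "space (PiM UNIV (\<lambda>_. measure_pmf \<rho>)) \<times> F \<in> sets (frog_space \<rho>)"
      unfolding frog_space_def using F by (intro pair_measureI sets.top)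
    moreover have "emeasure (frog_space \<rho>) (space (PiM UNIV (\<lambda>_. measure_pmf \<rho>)) \<times> F) = 0"
      unfolding frog_space_def steps.emeasure_pair_measure_Times[OF sets.top F] \<open>emeasure _ F = 0\<close> by simp
    ultimately show "space (PiM UNIV (\<lambda>_. measure_pmf \<rho>)) \<times> F \<in> null_sets (frog_space \<rho>)"
      by blast
    show "{\<omega> \<in> space (frog_space \<rho>). snd \<omega> j \<notin> unit_steps} \<subseteq> space (PiM UNIV (\<lambda>_. measure_pmf \<rho>)) \<times> F"
      by (auto simp: F_def prod_emb_iff space_PiM PiE_iff extensional_def)
  qed
qed

section \<open>Limit shapes\<close>

lemma (in prob_space) prob_tendsto_0_if_AE_eventually_notin:
  assumes "\<And>n. A n \<in> events" "AE x in M. eventually (\<lambda>n. x \<notin> A n) sequentially"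
  shows "(\<lambda>n. prob (A n)) \<longlonglongrightarrow> 0"
proof -
  have "(\<lambda>n. integral\<^sup>L M (indicator (A n) :: 'a \<Rightarrow> real)) \<longlonglongrightarrow> integral\<^sup>L M (\<lambda>_. 0 :: real)"
  proof (rule integral_dominated_convergence[where w = "\<lambda>_. 1"])
    show "AE x in M. (\<lambda>n. indicator (A n) x :: real) \<longlonglongrightarrow> 0"
      using assms(2)
    proof eventually_elim
      case (elim x)
      then have "eventually (\<lambda>n. indicator (A n) x = (0::real)) sequentially"
        by (rule eventually_mono) simp
      then show ?case by (rule tendsto_eventually)
    qed
  qed (use assms(1) in auto)
  with assms(1) show ?thesis by simp
qed

lemma (in prob_space) prob_tendsto_1_if_AE_eventually_in:
  assumes "\<And>n. A n \<in> events" "AE x in M. eventually (\<lambda>n. x \<in> A n) sequentially"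
  shows "(\<lambda>n. prob (A n)) \<longlonglongrightarrow> 1"
proof -
  have "(\<lambda>n. prob (space M - A n)) \<longlonglongrightarrow> 0"
    using assms by (intro prob_tendsto_0_if_AE_eventually_notin) auto
  then have "(\<lambda>n. 1 - prob (space M - A n)) \<longlonglongrightarrow> 1 - 0"
    by (intro tendsto_diff tendsto_const)
  with assms(1) show ?thesis by (simp add: prob_compl)
qed

definition nearest_site :: "real^'d \<Rightarrow> int^'d" where
  "nearest_site p = (\<chi> i. \<lceil>p $ i - 1/2\<rceil>)"

lemma in_cube_nearest_site: "p \<in> cube (nearest_site p)"
proof -
  have "real_of_int \<lceil>t - 1/2\<rceil> - 1/2 < t" "t \<le> real_of_int \<lceil>t - 1/2\<rceil> + 1/2" for t :: real
    using ceiling_correct[of "t - 1/2"] by linarith+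
  then show ?thesis by (simp add: cube_def nearest_site_def)
qed

lemma cube_unique:
  assumes "p \<in> cube x" "p \<in> cube y"
  shows "x = y"
proof -
  have "x $ i = y $ i" for i
  proof -
    from assms have "real_of_int (x $ i) - 1/2 < p $ i" "p $ i \<le> real_of_int (x $ i) + 1/2"
      "real_of_int (y $ i) - 1/2 < p $ i" "p $ i \<le> real_of_int (y $ i) + 1/2"
      by (auto simp: cube_def)
    then have "x $ i < y $ i + 1" "y $ i < x $ i + 1" by linarith+
    then show "x $ i = y $ i" by linarith
  qed
  then show ?thesis by (simp add: vec_eq_iff)
qed

lemma mem_xi_iff: "p \<in> xi eta X n \<longleftrightarrow> nearest_site p \<in> visited eta X n"
  unfolding xi_def using in_cube_nearest_site cube_unique by blast

lemma mem_scaled_xi_iff: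
  fixes p :: "real^'d"
  assumes "0 < n"
  shows "p \<in> (\<lambda>q. (1 / real n) *\<^sub>R q) ` xi eta X n \<longleftrightarrow> nearest_site (real n *\<^sub>R p) \<in> visited eta X n"
proof -
  have "p \<in> (\<lambda>q. (1 / real n) *\<^sub>R q) ` S \<longleftrightarrow> real n *\<^sub>R p \<in> S" for S
  proof
    assume "p \<in> (\<lambda>q. (1 / real n) *\<^sub>R q) ` S"
    then show "real n *\<^sub>R p \<in> S" using assms by auto
  next
    assume "real n *\<^sub>R p \<in> S"
    moreover have "p = (1 / real n) *\<^sub>R (real n *\<^sub>R p)" using assms by simp
    ultimately show "p \<in> (\<lambda>q. (1 / real n) *\<^sub>R q) ` S" by blast
  qed
  then show ?thesis by (simp add: mem_xi_iff)
qed

lemma shrink_avoids_closed: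
  fixes a :: "'a::real_normed_vector"
  assumes "closed S" "a \<notin> S"
  obtains \<epsilon> where "0 < \<epsilon>" "\<epsilon> < 1" "\<And>b. b \<in> S \<Longrightarrow> (1 - \<epsilon>) *\<^sub>R a \<noteq> (1 + \<epsilon>) *\<^sub>R b"
proof -
  have "((\<lambda>\<epsilon>. ((1 - \<epsilon>) / (1 + \<epsilon>)) *\<^sub>R a) \<longlongrightarrow> ((1 - 0) / (1 + 0)) *\<^sub>R a) (at_right 0)"
    by (intro tendsto_intros) auto
  then have "eventually (\<lambda>\<epsilon>. ((1 - \<epsilon>) / (1 + \<epsilon>)) *\<^sub>R a \<in> - S) (at_right 0)"
    using assms by (intro topological_tendstoD) auto
  moreover have "eventually (\<lambda>\<epsilon>. 0 < \<epsilon> \<and> \<epsilon> < (1::real)) (at_right 0)"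
    by (auto simp: eventually_at_right_field intro!: exI[of _ 1])
  ultimately have "eventually (\<lambda>\<epsilon>. 0 < \<epsilon> \<and> \<epsilon> < 1 \<and> ((1 - \<epsilon>) / (1 + \<epsilon>)) *\<^sub>R a \<notin> S) (at_right 0)"
    by eventually_elim auto
  then obtain \<epsilon> :: real where \<epsilon>: "0 < \<epsilon>" "\<epsilon> < 1" "((1 - \<epsilon>) / (1 + \<epsilon>)) *\<^sub>R a \<notin> S"
    using eventually_happens'[OF trivial_limit_at_right_real] by blast
  show ?thesis
  proof (rule that[OF \<epsilon>(1,2)])
    fix b assume "b \<in> S"
    have "b = ((1 - \<epsilon>) / (1 + \<epsilon>)) *\<^sub>R a" if "(1 - \<epsilon>) *\<^sub>R a = (1 + \<epsilon>) *\<^sub>R b"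
    proof -
      have "b = inverse (1 + \<epsilon>) *\<^sub>R ((1 + \<epsilon>) *\<^sub>R b)" using \<epsilon>(1) by simp
      also have "\<dots> = ((1 - \<epsilon>) / (1 + \<epsilon>)) *\<^sub>R a"
        by (simp flip: that add: divide_inverse mult.commute)
      finally show ?thesis .
    qed
    with \<epsilon>(3) \<open>b \<in> S\<close> show "(1 - \<epsilon>) *\<^sub>R a \<noteq> (1 + \<epsilon>) *\<^sub>R b" by blast
  qed
qed

text \<open>Defined through local_config to make it measurable; by AE_mem_unvisited_event_iff it is
  almost surely the event that x is not visited by time n.\<close>

definition unvisited_event :: "nat \<Rightarrow> int^'d \<Rightarrow> ('d::finite) config set" where
  "unvisited_event n x = local_config n -` {z. \<not> visits x n z}"

lemma sets_unvisited_event: "unvisited_event n x \<in> sets (frog_space \<rho>)"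
  unfolding unvisited_event_def by (rule sets_local_config_vimage)

lemma AE_mem_unvisited_event_iff:
  "AE \<omega> in frog_space \<rho>. \<forall>n x. \<omega> \<in> unvisited_event n x \<longleftrightarrow> x \<notin> visited (fst \<omega>) (snd \<omega>) n"
  using AE_unit_steps by eventually_elim (simp add: unvisited_event_def visits_local_config)

lemma measure_unvisited_event_mono:
  assumes "pgf_le \<pi> \<pi>'"
  shows "measure (frog_space \<pi>') (unvisited_event n x) \<le> measure (frog_space \<pi>) (unvisited_event n x)"
proof -
  interpret \<pi>: prob_space "frog_space \<pi>" by (rule prob_space_frog_space)
  interpret \<pi>': prob_space "frog_space \<pi>'" by (rule prob_space_frog_space)
  have "emeasure (frog_space \<pi>') (unvisited_event n x) \<le> emeasure (frog_space \<pi>) (unvisited_event n x)"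
    unfolding unvisited_event_def emeasure_local_config_vimage by (rule local_law_not_visits_mono[OF assms])
  then show ?thesis by (simp add: \<pi>.emeasure_eq_measure \<pi>'.emeasure_eq_measure)
qed

lemma limit_shape_inner_unvisited_tendsto_0:
  assumes "is_limit_shape \<rho> A" "0 < \<epsilon>" "\<epsilon> < 1" "p \<in> (\<lambda>q. (1 - \<epsilon>) *\<^sub>R q) ` A"
  shows "(\<lambda>n. measure (frog_space \<rho>) (unvisited_event n (nearest_site (real n *\<^sub>R p)))) \<longlonglongrightarrow> 0"
proof -
  interpret prob_space "frog_space \<rho>" by (rule prob_space_frog_space)
  have "AE \<omega> in frog_space \<rho>. eventually (\<lambda>n.
      (\<lambda>q. (1 - \<epsilon>) *\<^sub>R q) ` A \<subseteq> (\<lambda>q. (1 / real n) *\<^sub>R q) ` xi (fst \<omega>) (snd \<omega>) n) sequentially"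
    using assms(1-3) unfolding is_limit_shape_def eventually_conj_iff by blast
  then have "AE \<omega> in frog_space \<rho>.
      eventually (\<lambda>n. \<omega> \<notin> unvisited_event n (nearest_site (real n *\<^sub>R p))) sequentially"
    using AE_mem_unvisited_event_iff
  proof eventually_elim
    case (elim \<omega>)
    from elim(1) eventually_gt_at_top[of 0] show ?case
    proof eventually_elim
      case (elim n)
      with assms(4) have "p \<in> (\<lambda>q. (1 / real n) *\<^sub>R q) ` xi (fst \<omega>) (snd \<omega>) n" by blast
      with \<open>0 < n\<close> have "nearest_site (real n *\<^sub>R p) \<in> visited (fst \<omega>) (snd \<omega>) n"
        by (simp add: mem_scaled_xi_iff)
      with \<open>\<forall>n x. _\<close> show ?case by blast
    qed
  qed
  then show ?thesis
    by (intro prob_tendsto_0_if_AE_eventually_notin sets_unvisited_event)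
qed

lemma limit_shape_outer_unvisited_tendsto_1:
  assumes "is_limit_shape \<rho> A" "0 < \<epsilon>" "\<epsilon> < 1" "p \<notin> (\<lambda>q. (1 + \<epsilon>) *\<^sub>R q) ` A"
  shows "(\<lambda>n. measure (frog_space \<rho>) (unvisited_event n (nearest_site (real n *\<^sub>R p)))) \<longlonglongrightarrow> 1"
proof -
  interpret prob_space "frog_space \<rho>" by (rule prob_space_frog_space)
  have "AE \<omega> in frog_space \<rho>. eventually (\<lambda>n.
      (\<lambda>q. (1 / real n) *\<^sub>R q) ` xi (fst \<omega>) (snd \<omega>) n \<subseteq> (\<lambda>q. (1 + \<epsilon>) *\<^sub>R q) ` A) sequentially"
    using assms(1-3) unfolding is_limit_shape_def eventually_conj_iff by blast
  then have "AE \<omega> in frog_space \<rho>.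
      eventually (\<lambda>n. \<omega> \<in> unvisited_event n (nearest_site (real n *\<^sub>R p))) sequentially"
    using AE_mem_unvisited_event_iff
  proof eventually_elim
    case (elim \<omega>)
    from elim(1) eventually_gt_at_top[of 0] show ?case
    proof eventually_elim
      case (elim n)
      with assms(4) have "p \<notin> (\<lambda>q. (1 / real n) *\<^sub>R q) ` xi (fst \<omega>) (snd \<omega>) n" by blast
      with \<open>0 < n\<close> have "nearest_site (real n *\<^sub>R p) \<notin> visited (fst \<omega>) (snd \<omega>) n"
        by (simp add: mem_scaled_xi_iff)
      with \<open>\<forall>n x. _\<close> show ?case by blast
    qed
  qed
  then show ?thesis
    by (intro prob_tendsto_1_if_AE_eventually_in sets_unvisited_event)
qed

theorem corollary9:
  fixes \<pi> \<pi>' :: "nat pmf" and A A' :: "(real^'d) set"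
  assumes "is_limit_shape \<pi> A" and "is_limit_shape \<pi>' A'" and "pgf_le \<pi> \<pi>'"
  shows "A \<subseteq> A'"
proof
  fix a assume "a \<in> A"
  show "a \<in> A'"
  proof (rule ccontr)
    assume "a \<notin> A'"
    moreover have "closed A'" using assms(2) by (simp add: is_limit_shape_def)
    ultimately obtain \<epsilon> where \<epsilon>: "0 < \<epsilon>" "\<epsilon> < 1"
      and avoid: "\<And>b. b \<in> A' \<Longrightarrow> (1 - \<epsilon>) *\<^sub>R a \<noteq> (1 + \<epsilon>) *\<^sub>R b"
      using shrink_avoids_closed by blast
    define U where "U n = unvisited_event n (nearest_site (real n *\<^sub>R ((1 - \<epsilon>) *\<^sub>R a)))" for n
    have "(\<lambda>n. measure (frog_space \<pi>') (U n)) \<longlonglongrightarrow> 1"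
      unfolding U_def using avoid by (intro limit_shape_outer_unvisited_tendsto_1[OF assms(2) \<epsilon>]) blast
    moreover have "(\<lambda>n. measure (frog_space \<pi>) (U n)) \<longlonglongrightarrow> 0"
      unfolding U_def using \<open>a \<in> A\<close> by (intro limit_shape_inner_unvisited_tendsto_0[OF assms(1) \<epsilon>]) blast
    moreover have "\<forall>n. measure (frog_space \<pi>') (U n) \<le> measure (frog_space \<pi>) (U n)"
      unfolding U_def using measure_unvisited_event_mono[OF assms(3)] by blast
    ultimately have "(1::real) \<le> 0"
      by (meson LIMSEQ_le)
    then show False by simp
  qed
qed

end
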